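(* Let $\mathbf{X}\subseteq\mathbb{R}_+^n$ be an interval and $\mathrm{IC}(\mathbf{a}_0,\dots,\mathbf{a}_{n-1})$ an interval circulant matrix. (a) $\mathbf{X}$ is possibly $\mathrm{IC}$-robust, i.e. there exists $x\in\mathbf{X}$ with $x\in\mathrm{Attr}(A)$ for all $A\in\mathrm{IC}(\mathbf{a}_0,\dots,\mathbf{a}_{n-1})$, if and only if there exists $x\in\mathbf{X}$ satisfying $\lambda(A^{(i)})(A^{(i)})^{n^2}\otimes x=(A^{(i)})^{n^2+1}\otimes x$ for all $i\in\{0,\dots,n-1\}$ with $A^{(i)}\ne0$. (b) If moreover $\hat A\in\mathrm{IC}(\mathbf{a}_0,\dots,\mathbf{a}_{n-1})$, then $\mathbf{X}$ is tolerance $\mathrm{IC}$-robust (for every $x\in\mathbf{X}$ there exists $A\in\mathrm{IC}(\mathbf{a}_0,\dots,\mathbf{a}_{n-1})$ with $x\in\mathrm{Attr}(A)$) if and only if $\mathrm{IC}(\mathbf{a}_0,\dots,\mathbf{a}_{n-1})$ is possibly $\mathbf{X}$-robust (there exists $A\in\mathrm{IC}(\mathbf{a}_0,\dots,\mathbf{a}_{n-1})$ with $x\in\mathrm{Attr}(A)$ for all $x\in\mathbf{X}$).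
   Context: Max algebra on $\mathbb{R}_+$: $\oplus=\max$, ordinary product, $A^t$ max-algebraic power; $\lambda(A)$ greatest max-algebraic eigenvalue (maximum cycle geometric mean); $\mathrm{Attr}(A)=\{x\in\mathbb{R}_+^n: A^{t+1}\otimes x=\lambda(A)A^t\otimes x\text{ for some }t\ge0\}$. An interval $\mathbf{X}=\prod_i\mathbf{X}_i$ has each $\mathbf{X}_i\subseteq\mathbb{R}_+$ nonempty of one of the forms $[\underline{x}_i,\overline{x}_i]$, $(\underline{x}_i,\overline{x}_i)$, $(\underline{x}_i,\overline{x}_i]$, $[\underline{x}_i,\overline{x}_i)$. $\mathrm{Circ}(a_0,\dots,a_{n-1})$ has entries $A_{i,j}=a_t$, $t\equiv j-i\pmod n$; $\mathrm{IC}(\mathbf{a}_0,\dots,\mathbf{a}_{n-1})$ is the set of all $\mathrm{Circ}(a_0,\dots,a_{n-1})$ with $a_t\in\mathbf{a}_t$, each $\mathbf{a}_t\subseteq\mathbb{R}_+$ a nonempty interval of one of the four forms with endpoints $\underline a_t\le\overline a_t$. $A^{(k)}=\mathrm{Circ}(\underline{a}_0,\dots,\underline{a}_{k-1},\overline{a}_k,\underline{a}_{k+1},\dots,\underline{a}_{n-1})$; $\underline a=\max_k\underline a_k$, $\hat A=\mathrm{Circ}(\hat a_0,\dots,\hat a_{n-1})$, $\hat a_i=\min\{\underline a,\overline a_i\}$. *)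

theory Defs
  imports Complex_Main
begin

text \<open>Max algebra over nonnegative reals on n x n matrices and n-vectors.
  Matrices are functions nat => nat => real, vectors nat => real; only
  indices below n are meaningful.\<close>

type_synonym mat = "nat \<Rightarrow> nat \<Rightarrow> real"
type_synonym vec = "nat \<Rightarrow> real"

definition mmult :: "nat \<Rightarrow> mat \<Rightarrow> mat \<Rightarrow> mat" where
  "mmult n A B = (\<lambda>i j. Max {A i k * B k j | k. k < n})"

definition mident :: mat where
  "mident = (\<lambda>i j. if i = j then 1 else 0)"

fun mpow :: "nat \<Rightarrow> mat \<Rightarrow> nat \<Rightarrow> mat" where
  "mpow n A 0 = mident"
| "mpow n A (Suc t) = mmult n A (mpow n A t)"

definition mvec :: "nat \<Rightarrow> mat \<Rightarrow> vec \<Rightarrow> vec" where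
  "mvec n A x = (\<lambda>i. Max {A i k * x k | k. k < n})"

text \<open>Maximum cycle geometric mean (greatest max-algebraic eigenvalue).\<close>
definition mlambda :: "nat \<Rightarrow> mat \<Rightarrow> real" where
  "mlambda n A = Max {root k (\<Prod>j<k. A (\<sigma> j) (\<sigma> (Suc j))) | k \<sigma>.
      1 \<le> k \<and> k \<le> n \<and> (\<forall>j\<le>k. \<sigma> j < n) \<and> \<sigma> k = \<sigma> 0}"

definition veq :: "nat \<Rightarrow> vec \<Rightarrow> vec \<Rightarrow> bool" where
  "veq n x y \<longleftrightarrow> (\<forall>i<n. x i = y i)"

definition Attr :: "nat \<Rightarrow> mat \<Rightarrow> vec set" where
  "Attr n A = {x. (\<forall>i<n. 0 \<le> x i) \<and>
     (\<exists>t. veq n (mvec n (mpow n A (Suc t)) x) (\<lambda>i. mlambda n A * mvec n (mpow n A t) x i))}"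

datatype ikind = Closed | Open | LOpen | ROpen

fun ivl :: "ikind \<Rightarrow> real \<Rightarrow> real \<Rightarrow> real set" where
  "ivl Closed l u = {l..u}"
| "ivl Open l u = {l<..<u}"
| "ivl LOpen l u = {l<..u}"
| "ivl ROpen l u = {l..<u}"

definition valid_ivl :: "ikind \<Rightarrow> real \<Rightarrow> real \<Rightarrow> bool" where
  "valid_ivl k l u \<longleftrightarrow> 0 \<le> l \<and> l \<le> u \<and> ivl k l u \<noteq> {}"

definition ivec :: "nat \<Rightarrow> (nat \<Rightarrow> ikind) \<Rightarrow> vec \<Rightarrow> vec \<Rightarrow> vec set" where
  "ivec n k l u = {x. \<forall>i<n. x i \<in> ivl (k i) (l i) (u i)}"

definition Circ :: "nat \<Rightarrow> (nat \<Rightarrow> real) \<Rightarrow> mat" where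
  "Circ n a = (\<lambda>i j. a ((j + n - i) mod n))"

definition IC :: "nat \<Rightarrow> (nat \<Rightarrow> ikind) \<Rightarrow> (nat \<Rightarrow> real) \<Rightarrow> (nat \<Rightarrow> real) \<Rightarrow> mat set" where
  "IC n k l u = {Circ n a | a. \<forall>t<n. a t \<in> ivl (k t) (l t) (u t)}"

definition Ak :: "nat \<Rightarrow> (nat \<Rightarrow> real) \<Rightarrow> (nat \<Rightarrow> real) \<Rightarrow> nat \<Rightarrow> mat" where
  "Ak n l u k = Circ n (\<lambda>t. if t = k then u t else l t)"

definition Ahat :: "nat \<Rightarrow> (nat \<Rightarrow> real) \<Rightarrow> (nat \<Rightarrow> real) \<Rightarrow> mat" where
  "Ahat n l u = Circ n (\<lambda>t. min (Max {l s | s. s < n}) (u t))"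

definition mzero :: "nat \<Rightarrow> mat \<Rightarrow> bool" where
  "mzero n A \<longleftrightarrow> (\<forall>i<n. \<forall>j<n. A i j = 0)"

end

theory Submission
  imports Defs
begin

text \<open>For a circulant \<open>A = Circ n a\<close>, entry \<open>e\<close> of \<open>A^k \<otimes> x\<close> is the largest weight of a
  walk of \<open>k\<close> offsets starting at \<open>e\<close>, times \<open>x\<close> at its endpoint, and \<open>\<lambda>(A)\<close> is the largest
  coefficient \<open>M\<close>. Prepending \<open>n\<close> copies of a maximal offset, or deleting \<open>n\<close> copies of an
  offset that a walk of length at least \<open>n^2 + n\<close> must repeat \<open>n\<close> times, keeps the endpoint;
  so from time \<open>n^2\<close> on the orbit is periodic with period \<open>n\<close> and ratio \<open>M^n\<close>. Hence
  \<open>x \<in> Attr(A)\<close> iff \<open>M^k x \<le> A^k \<otimes> x\<close> for all \<open>k \<ge> n^2\<close>, iff \<open>A^(n^2+1) \<otimes> x = M A^(n^2) \<otimes> x\<close>.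
  This bound survives increasing the coefficients normalised by their maximum, and passing to
  limits of the coefficients. For (a), a member with maximal coefficient at position \<open>i\<close>
  dominates \<open>A^(i)\<close> in this sense, and \<open>A^(i)\<close> is a limit of members; for (b), \<open>Ahat\<close>
  dominates every member.\<close>

section \<open>Walks in powers of circulant matrices\<close>

lemma setcompr_lessThan_eq_image: "{f k | k. k < n} = f ` {..<n}"
  by auto

lemma Max_lessThan_ge: "k < n \<Longrightarrow> f k \<le> Max {f k | k. k < (n::nat)}"
  unfolding setcompr_lessThan_eq_image by (rule Max_ge) auto

lemma Max_lessThan_attained: "0 < n \<Longrightarrow> \<exists>k<n. Max {f k | k. k < (n::nat)} = f k"
proof -
  assume "0 < n"
  then have "Max (f ` {..<n}) \<in> f ` {..<n}" by (intro Max_in) auto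
  then show ?thesis unfolding setcompr_lessThan_eq_image by auto
qed

lemma Max_lessThan_le:
  "0 < n \<Longrightarrow> (\<And>k. k < n \<Longrightarrow> f k \<le> (c::real)) \<Longrightarrow> Max {f k | k. k < (n::nat)} \<le> c"
  unfolding setcompr_lessThan_eq_image by (subst Max_le_iff) auto

lemma Circ_add_mod: "i < n \<Longrightarrow> d < n \<Longrightarrow> Circ n a i ((i + d) mod n) = a d"
proof -
  assume h: "i < n" "d < n"
  have "((i + d) mod n + n - i) mod n = d"
  proof (cases "i + d < n")
    case True then show ?thesis using h by simp
  next
    case False
    then have "(i + d) mod n = i + d - n" using h by (simp add: le_mod_geq)
    then show ?thesis using h False by simp
  qed
  then show ?thesis unfolding Circ_def by simp
qed

lemma add_Circ_offset_mod: "i < (n::nat) \<Longrightarrow> k < n \<Longrightarrow> (i + (k + n - i) mod n) mod n = k"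
proof -
  assume h: "i < n" "k < n"
  have "(i + (k + n - i) mod n) mod n = (i + (k + n - i)) mod n"
    by (simp add: mod_add_right_eq)
  also have "i + (k + n - i) = k + n" using h by simp
  finally show ?thesis using h by simp
qed

lemma Circ_nonneg: "\<forall>t<n. 0 \<le> a t \<Longrightarrow> 0 < n \<Longrightarrow> 0 \<le> Circ n a i j"
  unfolding Circ_def by simp

lemma mpow_nonneg: "0 < n \<Longrightarrow> (\<And>i j. 0 \<le> A i j) \<Longrightarrow> 0 \<le> mpow n A k i j"
proof (induction k arbitrary: i j)
  case 0 then show ?case by (simp add: mident_def)
next
  case (Suc k)
  have "0 \<le> A i 0 * mpow n A k 0 j" using Suc by simp
  also have "\<dots> \<le> mmult n A (mpow n A k) i j"
    unfolding mmult_def using Max_lessThan_ge[of 0 n "\<lambda>l. A i l * mpow n A k l j"] Suc by simp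
  finally show ?case by simp
qed

text \<open>Entries of powers of a circulant matrix are maximal weights of walks: a list of
  offsets \<open>ds\<close> walks from \<open>i\<close> to \<open>(i + sum_list ds) mod n\<close> with weight
  \<open>prod_list (map a ds)\<close>.\<close>

lemma walk_weight_le_mpow_Circ:
  assumes n: "0 < n" and a: "\<forall>t<n. 0 \<le> a t"
  shows "length ds = k \<Longrightarrow> set ds \<subseteq> {..<n} \<Longrightarrow> i < n \<Longrightarrow>
    prod_list (map a ds) \<le> mpow n (Circ n a) k i ((i + sum_list ds) mod n)"
proof (induction ds arbitrary: k i)
  case Nil then show ?case by (simp add: mident_def)
next
  case (Cons d ds)
  then obtain k' where k: "k = Suc k'" by (cases k) auto
  define l where "l = (i + d) mod n"
  have l: "l < n" using n l_def by simp
  have d: "d < n" using Cons by simp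
  have C: "Circ n a i l = a d" using Circ_add_mod[OF Cons(4) d] l_def by simp
  have IH: "prod_list (map a ds) \<le> mpow n (Circ n a) k' l ((l + sum_list ds) mod n)"
    using Cons k l by simp
  have e: "(l + sum_list ds) mod n = (i + sum_list (d # ds)) mod n"
    unfolding l_def by (simp add: mod_add_left_eq add.assoc)
  have "prod_list (map a (d # ds)) = a d * prod_list (map a ds)" by simp
  also have "\<dots> \<le> Circ n a i l * mpow n (Circ n a) k' l ((i + sum_list (d # ds)) mod n)"
    using IH C e a d by (simp add: mult_left_mono)
  also have "\<dots> \<le> mpow n (Circ n a) k i ((i + sum_list (d # ds)) mod n)"
    unfolding k using Max_lessThan_ge[OF l,
        of "\<lambda>l. Circ n a i l * mpow n (Circ n a) k' l ((i + sum_list (d # ds)) mod n)"]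
    by (simp add: mmult_def)
  finally show ?case .
qed

lemma mpow_Circ_attained_by_walk:
  assumes n: "0 < n"
  shows "i < n \<Longrightarrow> j < n \<Longrightarrow> mpow n (Circ n a) k i j = 0 \<or>
    (\<exists>ds. length ds = k \<and> set ds \<subseteq> {..<n} \<and> (i + sum_list ds) mod n = j \<and>
       mpow n (Circ n a) k i j = prod_list (map a ds))"
proof (induction k arbitrary: i)
  case 0 then show ?case by (auto simp: mident_def)
next
  case (Suc k)
  obtain l where l: "l < n"
    and lm: "mpow n (Circ n a) (Suc k) i j = Circ n a i l * mpow n (Circ n a) k l j"
    using Max_lessThan_attained[OF n, of "\<lambda>l. Circ n a i l * mpow n (Circ n a) k l j"]
    by (auto simp: mmult_def)
  from Suc.IH[OF l Suc.prems(2)] show ?case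
  proof
    assume "mpow n (Circ n a) k l j = 0" then show ?thesis using lm by simp
  next
    assume "\<exists>ds. length ds = k \<and> set ds \<subseteq> {..<n} \<and> (l + sum_list ds) mod n = j \<and>
       mpow n (Circ n a) k l j = prod_list (map a ds)"
    then obtain ds where ds: "length ds = k" "set ds \<subseteq> {..<n}" "(l + sum_list ds) mod n = j"
      "mpow n (Circ n a) k l j = prod_list (map a ds)" by blast
    define d where "d = (l + n - i) mod n"
    have d: "d < n" using n d_def by simp
    have C: "Circ n a i l = a d" unfolding Circ_def d_def ..
    have "(i + sum_list (d # ds)) mod n = ((i + d) mod n + sum_list ds) mod n"
      by (simp add: mod_add_left_eq add.assoc)
    also have "(i + d) mod n = l" unfolding d_def using add_Circ_offset_mod[OF Suc.prems(1) l] .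
    finally have "(i + sum_list (d # ds)) mod n = j" using ds(3) by simp
    then show ?thesis using ds d lm C by (intro disjI2 exI[of _ "d # ds"]) simp
  qed
qed

section \<open>Orbits of circulant matrices\<close>

lemma pigeonhole_count_list:
  assumes "set ds \<subseteq> {..<n}" and "n * (n - 1) < length ds"
  shows "\<exists>t<n. n \<le> count_list ds t"
proof (rule ccontr)
  assume "\<not> (\<exists>t<n. n \<le> count_list ds t)"
  then have "sum (count_list ds) {..<n} \<le> card {..<n} * (n - 1)"
    using sum_bounded_above[of "{..<n}" "count_list ds" "n - 1"] by force
  moreover have "sum (count_list ds) {..<n} = length ds" using assms(1) by (rule sum_count_set) simp
  ultimately show False using assms(2) by simp
qed

lemma remove_copies_from_walk:
  fixes a :: "nat \<Rightarrow> real"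
  assumes "m \<le> count_list ds t"
  shows "\<exists>ds'. length ds = m + length ds' \<and> set ds' \<subseteq> set ds \<and>
    prod_list (map a ds) = a t ^ m * prod_list (map a ds') \<and> sum_list ds = m * t + sum_list ds'"
  using assms
proof (induction ds arbitrary: m)
  case Nil then show ?case by simp
next
  case (Cons d ds)
  show ?case
  proof (cases "d = t \<and> 0 < m")
    case True
    then obtain m' where m: "m = Suc m'" "d = t" by (cases m) auto
    then have "m' \<le> count_list ds t" using Cons.prems by simp
    then obtain ds' where "length ds = m' + length ds'" "set ds' \<subseteq> set ds"
      "prod_list (map a ds) = a t ^ m' * prod_list (map a ds')" "sum_list ds = m' * t + sum_list ds'"
      using Cons.IH by blast
    then show ?thesis using m by (intro exI[of _ ds']) auto
  next
    case False
    then obtain ds' where "length ds = m + length ds'" "set ds' \<subseteq> set ds"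
      "prod_list (map a ds) = a t ^ m * prod_list (map a ds')" "sum_list ds = m * t + sum_list ds'"
      using Cons.IH[of m] Cons.prems by (cases "d = t") auto
    then show ?thesis by (intro exI[of _ "d # ds'"]) (auto simp: algebra_simps)
  qed
qed

definition max_coeff :: "nat \<Rightarrow> (nat \<Rightarrow> real) \<Rightarrow> real" where
  "max_coeff n a = Max {a t | t. t < n}"

definition circ_orbit :: "nat \<Rightarrow> (nat \<Rightarrow> real) \<Rightarrow> vec \<Rightarrow> nat \<Rightarrow> vec" where
  "circ_orbit n a x k = mvec n (mpow n (Circ n a) k) x"

lemma max_coeff_ge: "t < n \<Longrightarrow> a t \<le> max_coeff n a"
  unfolding max_coeff_def by (rule Max_lessThan_ge)

lemma max_coeff_attained: "0 < n \<Longrightarrow> \<exists>t<n. a t = max_coeff n a"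
  unfolding max_coeff_def using Max_lessThan_attained[of n a] by metis

lemma max_coeff_nonneg: "0 < n \<Longrightarrow> \<forall>t<n. 0 \<le> a t \<Longrightarrow> 0 \<le> max_coeff n a"
  using max_coeff_ge[of 0 n a] by force

lemma walk_weight_nonneg:
  "\<forall>t<n. 0 \<le> (a t :: real) \<Longrightarrow> set ds \<subseteq> {..<n} \<Longrightarrow> 0 \<le> prod_list (map a ds)"
  by (induction ds) auto

lemma walk_weight_le_power:
  "\<forall>t<n. 0 \<le> (a t :: real) \<Longrightarrow> set ds \<subseteq> {..<n} \<Longrightarrow>
   prod_list (map a ds) \<le> max_coeff n a ^ length ds"
proof (induction ds)
  case Nil then show ?case by simp
next
  case (Cons d ds)
  then have "a d \<le> max_coeff n a" "0 \<le> a d" "0 \<le> prod_list (map a ds)"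
    using max_coeff_ge walk_weight_nonneg by auto
  then show ?case using Cons by (simp add: mult_mono')
qed

lemma walk_weight_scale:
  "\<forall>t<n. 0 \<le> (a t :: real) \<Longrightarrow> \<forall>t<n. a t \<le> c * b t \<Longrightarrow> set ds \<subseteq> {..<n} \<Longrightarrow>
   prod_list (map a ds) \<le> c ^ length ds * prod_list (map b ds)"
proof (induction ds)
  case Nil then show ?case by simp
next
  case (Cons d ds)
  then have "a d \<le> c * b d" "0 \<le> a d" "0 \<le> prod_list (map a ds)"
    using walk_weight_nonneg by auto
  then have "a d * prod_list (map a ds) \<le> (c * b d) * (c ^ length ds * prod_list (map b ds))"
    using Cons by (intro mult_mono) (auto intro: order_trans)
  then show ?case by (simp add: algebra_simps)
qed

context
  fixes n :: nat and a :: "nat \<Rightarrow> real" and x :: vec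
  assumes n: "0 < n" and a: "\<forall>t<n. 0 \<le> a t" and x: "\<forall>i<n. 0 \<le> x i"
begin

lemma circ_orbit_nonneg: "0 \<le> circ_orbit n a x k e"
proof -
  have "0 \<le> mpow n (Circ n a) k e 0 * x 0"
    using mpow_nonneg[OF n Circ_nonneg[OF a n]] x n by simp
  also have "\<dots> \<le> circ_orbit n a x k e" unfolding circ_orbit_def mvec_def
    using Max_lessThan_ge[OF n, of "\<lambda>j. mpow n (Circ n a) k e j * x j"] by simp
  finally show ?thesis .
qed

lemma walk_weight_le_circ_orbit:
  "length ds = k \<Longrightarrow> set ds \<subseteq> {..<n} \<Longrightarrow> e < n \<Longrightarrow>
   prod_list (map a ds) * x ((e + sum_list ds) mod n) \<le> circ_orbit n a x k e"
proof -
  assume h: "length ds = k" "set ds \<subseteq> {..<n}" "e < n"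
  define j where "j = (e + sum_list ds) mod n"
  have j: "j < n" using n j_def by simp
  have "prod_list (map a ds) * x j \<le> mpow n (Circ n a) k e j * x j"
    using walk_weight_le_mpow_Circ[OF n a h] x j j_def by (simp add: mult_right_mono)
  also have "\<dots> \<le> circ_orbit n a x k e" unfolding circ_orbit_def mvec_def
    using Max_lessThan_ge[OF j, of "\<lambda>j. mpow n (Circ n a) k e j * x j"] by simp
  finally show ?thesis unfolding j_def .
qed

lemma circ_orbit_attained_by_walk:
  assumes e: "e < n"
  obtains ds where "length ds = k" "set ds \<subseteq> {..<n}"
    "circ_orbit n a x k e = prod_list (map a ds) * x ((e + sum_list ds) mod n)"
proof -
  obtain j where j: "j < n" and vj: "circ_orbit n a x k e = mpow n (Circ n a) k e j * x j"
    using Max_lessThan_attained[OF n, of "\<lambda>j. mpow n (Circ n a) k e j * x j"]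
    unfolding circ_orbit_def mvec_def by auto
  from mpow_Circ_attained_by_walk[OF n e j, of a k] show ?thesis
  proof
    assume "mpow n (Circ n a) k e j = 0"
    then have zero: "circ_orbit n a x k e = 0" using vj by simp
    define ds where "ds = replicate k (0::nat)"
    have ds: "length ds = k" "set ds \<subseteq> {..<n}" using n by (auto simp: ds_def)
    have "0 \<le> prod_list (map a ds) * x ((e + sum_list ds) mod n)"
      using walk_weight_nonneg[OF a ds(2)] x n by simp
    then have "circ_orbit n a x k e = prod_list (map a ds) * x ((e + sum_list ds) mod n)"
      using walk_weight_le_circ_orbit[OF ds e] zero by simp
    then show ?thesis using that ds by blast
  qed (use vj that in auto)
qed

lemma walk_weight_mult_circ_orbit_le:
  "length ds = k \<Longrightarrow> set ds \<subseteq> {..<n} \<Longrightarrow> e < n \<Longrightarrow>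
   prod_list (map a ds) * circ_orbit n a x j ((e + sum_list ds) mod n) \<le> circ_orbit n a x (k + j) e"
proof -
  assume h: "length ds = k" "set ds \<subseteq> {..<n}" "e < n"
  define f where "f = (e + sum_list ds) mod n"
  have "f < n" using n f_def by simp
  then obtain ds' where ds': "length ds' = j" "set ds' \<subseteq> {..<n}"
    "circ_orbit n a x j f = prod_list (map a ds') * x ((f + sum_list ds') mod n)"
    by (rule circ_orbit_attained_by_walk)
  have "(f + sum_list ds') mod n = (e + sum_list (ds @ ds')) mod n"
    unfolding f_def by (simp add: mod_add_left_eq add.assoc)
  then have "prod_list (map a ds) * circ_orbit n a x j f
      = prod_list (map a (ds @ ds')) * x ((e + sum_list (ds @ ds')) mod n)"
    using ds' by simp
  also have "\<dots> \<le> circ_orbit n a x (k + j) e"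
    using walk_weight_le_circ_orbit[of "ds @ ds'" "k + j" e] h ds' by simp
  finally show ?thesis unfolding f_def .
qed

lemma circ_orbit_Suc_ge:
  "d < n \<Longrightarrow> e < n \<Longrightarrow> a d * circ_orbit n a x j ((e + d) mod n) \<le> circ_orbit n a x (Suc j) e"
  using walk_weight_mult_circ_orbit_le[of "[d]" 1 e j] by simp

lemma circ_orbit_Suc_le:
  assumes e: "e < n"
  obtains d where "d < n" "circ_orbit n a x (Suc j) e \<le> a d * circ_orbit n a x j ((e + d) mod n)"
proof -
  obtain ds where ds: "length ds = Suc j" "set ds \<subseteq> {..<n}"
    "circ_orbit n a x (Suc j) e = prod_list (map a ds) * x ((e + sum_list ds) mod n)"
    using circ_orbit_attained_by_walk[OF e] .
  then obtain d ds' where d: "ds = d # ds'" "d < n" "length ds' = j" "set ds' \<subseteq> {..<n}"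
    by (auto simp: length_Suc_conv)
  have "(e + sum_list ds) mod n = ((e + d) mod n + sum_list ds') mod n"
    using d(1) by (simp add: mod_add_left_eq add.assoc)
  then have "prod_list (map a ds') * x ((e + sum_list ds) mod n)
      \<le> circ_orbit n a x j ((e + d) mod n)"
    using walk_weight_le_circ_orbit[OF d(3,4), of "(e + d) mod n"] n by simp
  then have "circ_orbit n a x (Suc j) e \<le> a d * circ_orbit n a x j ((e + d) mod n)"
    using ds(3) d a by (simp add: mult.assoc mult_left_mono)
  then show ?thesis using that d(2) by blast
qed

lemma circ_orbit_zero_rate:
  assumes "max_coeff n a = 0" and "e < n"
  shows "circ_orbit n a x (Suc k) e = 0"
proof -
  obtain ds where ds: "length ds = Suc k" "set ds \<subseteq> {..<n}"
    "circ_orbit n a x (Suc k) e = prod_list (map a ds) * x ((e + sum_list ds) mod n)"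
    using circ_orbit_attained_by_walk[OF assms(2)] .
  have "prod_list (map a ds) = 0"
    using walk_weight_le_power[OF a ds(2)] walk_weight_nonneg[OF a ds(2)] assms(1) ds(1) by simp
  then show ?thesis using ds(3) by simp
qed


lemma le_circ_orbit_0: "e < n \<Longrightarrow> x e \<le> circ_orbit n a x 0 e"
  using walk_weight_le_circ_orbit[of "[]" 0 e] by simp

lemma circ_orbit_add_periods_ge:
  assumes e: "e < n"
  shows "max_coeff n a ^ (m * n) * circ_orbit n a x k e \<le> circ_orbit n a x (k + m * n) e"
proof -
  obtain t where t: "t < n" "a t = max_coeff n a" using max_coeff_attained[OF n] by blast
  obtain ds where ds: "length ds = k" "set ds \<subseteq> {..<n}"
    "circ_orbit n a x k e = prod_list (map a ds) * x ((e + sum_list ds) mod n)"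
    using circ_orbit_attained_by_walk[OF e] .
  define ds' where "ds' = replicate (m * n) t @ ds"
  have ds': "length ds' = k + m * n" "set ds' \<subseteq> {..<n}" using ds t by (auto simp: ds'_def)
  have "e + sum_list ds' = (e + sum_list ds) + n * (m * t)"
    by (simp add: ds'_def sum_list_replicate)
  then have "(e + sum_list ds') mod n = (e + sum_list ds) mod n" by (simp only: mod_mult_self2)
  then have "max_coeff n a ^ (m * n) * circ_orbit n a x k e
      = prod_list (map a ds') * x ((e + sum_list ds') mod n)"
    using ds(3) t(2) by (simp add: ds'_def prod_list_replicate)
  also have "\<dots> \<le> circ_orbit n a x (k + m * n) e" using walk_weight_le_circ_orbit[OF ds' e] .
  finally show ?thesis .
qed

lemma circ_orbit_add_period_le:
  assumes k: "n * n \<le> k" and e: "e < n"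
  shows "circ_orbit n a x (k + n) e \<le> max_coeff n a ^ n * circ_orbit n a x k e"
proof -
  obtain ds where ds: "length ds = k + n" "set ds \<subseteq> {..<n}"
    "circ_orbit n a x (k + n) e = prod_list (map a ds) * x ((e + sum_list ds) mod n)"
    using circ_orbit_attained_by_walk[OF e] .
  have "n * (n - 1) < length ds" using ds(1) k n by (simp add: algebra_simps)
  then obtain t where t: "t < n" "n \<le> count_list ds t" using pigeonhole_count_list[OF ds(2)] by blast
  then obtain ds' where ds': "length ds = n + length ds'" "set ds' \<subseteq> set ds"
    "prod_list (map a ds) = a t ^ n * prod_list (map a ds')" "sum_list ds = n * t + sum_list ds'"
    using remove_copies_from_walk by blast
  have ds'_walk: "length ds' = k" "set ds' \<subseteq> {..<n}" using ds ds' by auto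
  have "e + sum_list ds = (e + sum_list ds') + n * t" using ds'(4) by simp
  then have "(e + sum_list ds) mod n = (e + sum_list ds') mod n" by (simp only: mod_mult_self2)
  then have "circ_orbit n a x (k + n) e = a t ^ n * (prod_list (map a ds') * x ((e + sum_list ds') mod n))"
    using ds(3) ds'(3) by simp
  also have "\<dots> \<le> max_coeff n a ^ n * (prod_list (map a ds') * x ((e + sum_list ds') mod n))"
    using walk_weight_nonneg[OF a ds'_walk(2)] x n a t max_coeff_ge[OF t(1)]
    by (intro mult_right_mono power_mono) auto
  also have "\<dots> \<le> max_coeff n a ^ n * circ_orbit n a x k e"
    using walk_weight_le_circ_orbit[OF ds'_walk e] max_coeff_nonneg[OF n a]
    by (simp add: mult_left_mono)
  finally show ?thesis .
qed

lemma circ_orbit_periodic: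
  assumes "n * n \<le> k" and "e < n"
  shows "circ_orbit n a x (k + m * n) e = max_coeff n a ^ (m * n) * circ_orbit n a x k e"
proof (induction m)
  case 0 then show ?case by simp
next
  case (Suc m)
  have "circ_orbit n a x (k + Suc m * n) e = circ_orbit n a x ((k + m * n) + 1 * n) e"
    by (simp add: algebra_simps)
  also have "\<dots> = max_coeff n a ^ n * circ_orbit n a x (k + m * n) e"
    using circ_orbit_add_period_le[of "k + m * n" e] circ_orbit_add_periods_ge[of e 1 "k + m * n"]
      assms by simp
  also have "\<dots> = max_coeff n a ^ (Suc m * n) * circ_orbit n a x k e"
    using Suc by (simp add: power_add algebra_simps)
  finally show ?case .
qed

lemma circ_orbit_shift_ge:
  assumes j: "\<forall>f<n. max_coeff n a ^ j * x f \<le> circ_orbit n a x j f" and e: "e < n"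
  shows "max_coeff n a ^ j * circ_orbit n a x k e \<le> circ_orbit n a x (k + j) e"
proof -
  obtain ds where ds: "length ds = k" "set ds \<subseteq> {..<n}"
    "circ_orbit n a x k e = prod_list (map a ds) * x ((e + sum_list ds) mod n)"
    using circ_orbit_attained_by_walk[OF e] .
  have "max_coeff n a ^ j * circ_orbit n a x k e
      = prod_list (map a ds) * (max_coeff n a ^ j * x ((e + sum_list ds) mod n))"
    using ds(3) by (simp add: algebra_simps)
  also have "\<dots> \<le> prod_list (map a ds) * circ_orbit n a x j ((e + sum_list ds) mod n)"
    using j n walk_weight_nonneg[OF a ds(2)] by (simp add: mult_left_mono)
  also have "\<dots> \<le> circ_orbit n a x (k + j) e"
    using walk_weight_mult_circ_orbit_le[OF ds(1,2) e] .
  finally show ?thesis .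
qed

lemma circ_orbit_eigen_step_Suc:
  assumes t: "\<forall>f<n. circ_orbit n a x (Suc t) f = max_coeff n a * circ_orbit n a x t f"
    and e: "e < n"
  shows "circ_orbit n a x (Suc (Suc t)) e = max_coeff n a * circ_orbit n a x (Suc t) e"
proof (rule antisym)
  have M: "0 \<le> max_coeff n a" using max_coeff_nonneg[OF n a] .
  obtain d where d: "d < n"
    "circ_orbit n a x (Suc (Suc t)) e \<le> a d * circ_orbit n a x (Suc t) ((e + d) mod n)"
    using circ_orbit_Suc_le[OF e] .
  note d(2)
  also have "a d * circ_orbit n a x (Suc t) ((e + d) mod n)
      = max_coeff n a * (a d * circ_orbit n a x t ((e + d) mod n))"
    using t n by simp
  also have "\<dots> \<le> max_coeff n a * circ_orbit n a x (Suc t) e"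
    using circ_orbit_Suc_ge[OF d(1) e] M by (simp add: mult_left_mono)
  finally show "circ_orbit n a x (Suc (Suc t)) e \<le> max_coeff n a * circ_orbit n a x (Suc t) e" .
  obtain d' where d': "d' < n"
    "circ_orbit n a x (Suc t) e \<le> a d' * circ_orbit n a x t ((e + d') mod n)"
    using circ_orbit_Suc_le[OF e] .
  have "max_coeff n a * circ_orbit n a x (Suc t) e
      \<le> max_coeff n a * (a d' * circ_orbit n a x t ((e + d') mod n))"
    using d' M by (simp add: mult_left_mono)
  also have "\<dots> = a d' * circ_orbit n a x (Suc t) ((e + d') mod n)" using t n by simp
  also have "\<dots> \<le> circ_orbit n a x (Suc (Suc t)) e" using circ_orbit_Suc_ge[OF d'(1) e] .
  finally show "max_coeff n a * circ_orbit n a x (Suc t) e \<le> circ_orbit n a x (Suc (Suc t)) e" .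
qed

lemma circ_orbit_geometric:
  assumes "\<forall>f<n. circ_orbit n a x (Suc t) f = max_coeff n a * circ_orbit n a x t f"
  shows "\<forall>e<n. circ_orbit n a x (t + j) e = max_coeff n a ^ j * circ_orbit n a x t e"
proof -
  have step: "\<forall>f<n. circ_orbit n a x (Suc (t + j)) f = max_coeff n a * circ_orbit n a x (t + j) f" for j
    by (induction j) (use assms circ_orbit_eigen_step_Suc in auto)
  show ?thesis by (induction j) (use step in auto)
qed

end

section \<open>The attraction bound\<close>

definition attr_bound :: "nat \<Rightarrow> (nat \<Rightarrow> real) \<Rightarrow> vec \<Rightarrow> bool" where
  "attr_bound n a x \<longleftrightarrow>
     (\<forall>k\<ge>n * n. \<forall>e<n. max_coeff n a ^ k * x e \<le> circ_orbit n a x k e)"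

context
  fixes n :: nat and a :: "nat \<Rightarrow> real" and x :: vec
  assumes n: "0 < n" and a: "\<forall>t<n. 0 \<le> a t" and x: "\<forall>i<n. 0 \<le> x i"
begin

lemma attr_bound_zero_rate:
  assumes "max_coeff n a = 0"
  shows "attr_bound n a x"
  unfolding attr_bound_def
proof (intro allI impI)
  fix k e assume "n * n \<le> k"
  then have "0 < k" using n by (metis le_0_eq mult_is_0 neq0_conv)
  then show "max_coeff n a ^ k * x e \<le> circ_orbit n a x k e"
    using assms circ_orbit_nonneg[OF n a x] by (simp add: zero_power)
qed

lemma attr_bound_imp_eigen_step:
  assumes bound: "attr_bound n a x" and e: "e < n"
  shows "circ_orbit n a x (Suc (n * n)) e = max_coeff n a * circ_orbit n a x (n * n) e"
proof (cases "max_coeff n a = 0")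
  case True then show ?thesis using circ_orbit_zero_rate[OF n a x True e] by simp
next
  case False
  define K where "K = n * n"
  define M where "M = max_coeff n a"
  have M: "0 < M" using False max_coeff_nonneg[OF n a] M_def by simp
  have shift: "M ^ j * circ_orbit n a x k e \<le> circ_orbit n a x (k + j) e" if "K \<le> j" for j k
    using circ_orbit_shift_ge[OF n a x _ e] bound that unfolding attr_bound_def K_def M_def by blast
  have "M ^ K * (M * circ_orbit n a x K e) = M ^ Suc K * circ_orbit n a x K e" by simp
  also have "\<dots> \<le> circ_orbit n a x (K + Suc K) e"
    using shift[of "Suc K" K] by simp
  also have "K + Suc K = Suc K + n * n" unfolding K_def by simp
  also have "circ_orbit n a x (Suc K + n * n) e = M ^ K * circ_orbit n a x (Suc K) e"
    using circ_orbit_periodic[OF n a x _ e, of "Suc K" n] K_def M_def by simp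
  finally have lower: "M * circ_orbit n a x K e \<le> circ_orbit n a x (Suc K) e"
    using M by (simp add: mult_le_cancel_left_pos)
  define J where "J = K + n - 1" \<comment> \<open>\<open>J \<ge> K\<close>, and \<open>Suc K + J\<close> exceeds \<open>K\<close> by a multiple of \<open>n\<close>\<close>
  have "M ^ J * circ_orbit n a x (Suc K) e \<le> circ_orbit n a x (Suc K + J) e"
    using shift[of J "Suc K"] n by (simp add: J_def)
  also have "Suc K + J = K + (n + 1) * n" unfolding J_def K_def using n by (simp add: algebra_simps)
  also have "circ_orbit n a x (K + (n + 1) * n) e = M ^ J * (M * circ_orbit n a x K e)"
    using circ_orbit_periodic[OF n a x _ e, of K "n + 1"] n
    by (simp add: K_def M_def J_def algebra_simps flip: power_Suc)
  finally have upper: "circ_orbit n a x (Suc K) e \<le> M * circ_orbit n a x K e"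
    using M by (simp add: mult_le_cancel_left_pos)
  show ?thesis using lower upper K_def M_def by simp
qed

lemma eigen_step_imp_attr_bound:
  assumes t: "\<forall>f<n. circ_orbit n a x (Suc t) f = max_coeff n a * circ_orbit n a x t f"
  shows "attr_bound n a x"
proof (cases "max_coeff n a = 0")
  case True then show ?thesis by (rule attr_bound_zero_rate)
next
  case False
  define M where "M = max_coeff n a"
  have M: "0 < M" using False max_coeff_nonneg[OF n a] M_def by simp
  have geom: "\<forall>e<n. circ_orbit n a x (t + j) e = M ^ j * circ_orbit n a x t e" for j
    using circ_orbit_geometric[OF n a x t] M_def by simp
  show ?thesis unfolding attr_bound_def
  proof (intro allI impI)
    fix k e assume k: "n * n \<le> k" and e: "e < n"
    have tn: "t \<le> t * n" using n by simp
    text \<open>Compare the orbit at time \<open>k + t * n\<close> through the geometric regime after \<open>t\<close>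
      and through the periodic regime after \<open>k\<close>.\<close>
    have "M ^ (t * n) * (M ^ k * x e) \<le> M ^ k * (M ^ (t * n) * circ_orbit n a x 0 e)"
      using le_circ_orbit_0[OF n a x e] M by (simp add: algebra_simps)
    also have "\<dots> \<le> M ^ k * circ_orbit n a x (t * n) e"
      using circ_orbit_add_periods_ge[OF n a x e, of t 0] M M_def by (simp add: mult_left_mono)
    also have "\<dots> = M ^ k * (M ^ (t * n - t) * circ_orbit n a x t e)"
      using geom[of "t * n - t"] e tn by simp
    also have "\<dots> = M ^ (k + (t * n - t)) * circ_orbit n a x t e"
      by (simp add: power_add)
    also have "\<dots> = circ_orbit n a x (t + (k + (t * n - t))) e"
      using geom e by simp
    also have "t + (k + (t * n - t)) = k + t * n" using tn by linarith
    also have "circ_orbit n a x (k + t * n) e = M ^ (t * n) * circ_orbit n a x k e"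
      using circ_orbit_periodic[OF n a x k e, of t] M_def by simp
    finally show "max_coeff n a ^ k * x e \<le> circ_orbit n a x k e"
      using M M_def by (simp add: mult_le_cancel_left_pos)
  qed
qed

end

lemma finite_cycle_means:
  "finite {root k (\<Prod>j<k. A (\<sigma> j) (\<sigma> (Suc j))) | k \<sigma>.
      1 \<le> k \<and> k \<le> n \<and> (\<forall>j\<le>k. \<sigma> j < n) \<and> \<sigma> k = \<sigma> 0}"
  (is "finite ?S")
proof (rule finite_subset)
  define F where "F xs = root (length xs - 1) (\<Prod>j<length xs - 1. A (xs ! j) (xs ! Suc j))"
    for xs :: "nat list"
  show "?S \<subseteq> F ` {xs. set xs \<subseteq> {..<n} \<and> length xs \<le> Suc n}"
  proof
    fix y assume "y \<in> ?S"
    then obtain k \<sigma> where y: "y = root k (\<Prod>j<k. A (\<sigma> j) (\<sigma> (Suc j)))" and k: "k \<le> n"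
      and \<sigma>: "\<forall>j\<le>k. \<sigma> j < n" by blast
    define xs where "xs = map \<sigma> [0..<Suc k]"
    have len: "length xs - 1 = k" by (simp add: xs_def)
    have "(\<Prod>j<k. A (xs ! j) (xs ! Suc j)) = (\<Prod>j<k. A (\<sigma> j) (\<sigma> (Suc j)))"
      by (rule prod.cong) (auto simp del: upt_Suc simp: xs_def nth_map_upt)
    then have "y = F xs" unfolding y F_def len by simp
    moreover have "set xs \<subseteq> {..<n} \<and> length xs \<le> Suc n" unfolding xs_def using \<sigma> k by auto
    ultimately show "y \<in> F ` {xs. set xs \<subseteq> {..<n} \<and> length xs \<le> Suc n}" by blast
  qed
  show "finite (F ` {xs. set xs \<subseteq> {..<n} \<and> length xs \<le> Suc n})"
    by (intro finite_imageI finite_lists_length_le) simp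
qed

lemma mlambda_Circ:
  assumes n: "0 < n" and a: "\<forall>t<n. 0 \<le> a t"
  shows "mlambda n (Circ n a) = max_coeff n a"
proof -
  define A where "A = Circ n a"
  define M where "M = max_coeff n a"
  have M: "0 \<le> M" using max_coeff_nonneg[OF n a] M_def by simp
  have entry: "0 \<le> A i j \<and> A i j \<le> M" for i j
    unfolding A_def Circ_def M_def using a max_coeff_ge n by simp
  have upper: "root k (\<Prod>j<k. A (\<sigma> j) (\<sigma> (Suc j))) \<le> M" if "1 \<le> k" for k \<sigma>
  proof -
    have "(\<Prod>j<k. A (\<sigma> j) (\<sigma> (Suc j))) \<le> M ^ k"
      using prod_mono[of "{..<k}" "\<lambda>j. A (\<sigma> j) (\<sigma> (Suc j))" "\<lambda>_. M"] entry by simp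
    then have "root k (\<Prod>j<k. A (\<sigma> j) (\<sigma> (Suc j))) \<le> root k (M ^ k)" using that by simp
    also have "\<dots> = M" using that M by (simp add: real_root_power_cancel)
    finally show ?thesis .
  qed
  text \<open>The bound is attained on the cycle \<open>0, t, 2 t, \<dots>\<close> of length \<open>n\<close> through an
    offset \<open>t\<close> of maximal weight.\<close>
  obtain t where t: "t < n" "a t = M" using max_coeff_attained[OF n] M_def by metis
  define \<sigma> where "\<sigma> j = (j * t) mod n" for j
  have "\<sigma> (Suc j) = (\<sigma> j + t) mod n" for j
    using mod_add_left_eq[of "j * t" n t] unfolding \<sigma>_def by (simp add: add.commute)
  then have "A (\<sigma> j) (\<sigma> (Suc j)) = M" for j
    unfolding A_def using Circ_add_mod[of "\<sigma> j" n t a] t n by (simp add: \<sigma>_def)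
  then have "root n (\<Prod>j<n. A (\<sigma> j) (\<sigma> (Suc j))) = M"
    using n M by (simp add: real_root_power_cancel)
  moreover have "\<sigma> n = \<sigma> 0" "\<forall>j\<le>n. \<sigma> j < n" using n by (simp_all add: \<sigma>_def)
  ultimately show ?thesis unfolding mlambda_def A_def[symmetric] M_def[symmetric]
    using n upper by (intro Max_eqI finite_cycle_means) (auto intro!: exI[of _ n] exI[of _ \<sigma>])
qed

lemma Attr_Circ_iff_attr_bound:
  assumes n: "0 < n" and a: "\<forall>t<n. 0 \<le> a t" and x: "\<forall>i<n. 0 \<le> x i"
  shows "x \<in> Attr n (Circ n a) \<longleftrightarrow> attr_bound n a x"
proof
  assume "x \<in> Attr n (Circ n a)"
  then obtain t where "\<forall>f<n. circ_orbit n a x (Suc t) f = max_coeff n a * circ_orbit n a x t f"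
    unfolding Attr_def veq_def circ_orbit_def mlambda_Circ[OF n a] by auto
  then show "attr_bound n a x" by (rule eigen_step_imp_attr_bound[OF n a x])
next
  assume "attr_bound n a x"
  then have "\<forall>f<n. circ_orbit n a x (Suc (n * n)) f = max_coeff n a * circ_orbit n a x (n * n) f"
    using attr_bound_imp_eigen_step[OF n a x] by blast
  then show "x \<in> Attr n (Circ n a)"
    unfolding Attr_def veq_def circ_orbit_def mlambda_Circ[OF n a] using x by blast
qed

lemma eigen_condition_Circ_iff_attr_bound:
  assumes n: "0 < n" and a: "\<forall>t<n. 0 \<le> a t" and x: "\<forall>i<n. 0 \<le> x i"
  shows "veq n (\<lambda>r. mlambda n (Circ n a) * mvec n (mpow n (Circ n a) (n^2)) x r)
                (mvec n (mpow n (Circ n a) (n^2 + 1)) x) \<longleftrightarrow> attr_bound n a x"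
proof
  assume "veq n (\<lambda>r. mlambda n (Circ n a) * mvec n (mpow n (Circ n a) (n^2)) x r)
                (mvec n (mpow n (Circ n a) (n^2 + 1)) x)"
  then have "\<forall>f<n. circ_orbit n a x (Suc (n * n)) f = max_coeff n a * circ_orbit n a x (n * n) f"
    unfolding veq_def circ_orbit_def mlambda_Circ[OF n a] by (simp add: power2_eq_square)
  then show "attr_bound n a x" by (rule eigen_step_imp_attr_bound[OF n a x])
next
  assume "attr_bound n a x"
  then have "\<forall>f<n. circ_orbit n a x (Suc (n * n)) f = max_coeff n a * circ_orbit n a x (n * n) f"
    using attr_bound_imp_eigen_step[OF n a x] by blast
  then show "veq n (\<lambda>r. mlambda n (Circ n a) * mvec n (mpow n (Circ n a) (n^2)) x r)
                (mvec n (mpow n (Circ n a) (n^2 + 1)) x)"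
    unfolding veq_def circ_orbit_def mlambda_Circ[OF n a] by (simp add: power2_eq_square)
qed

lemma circ_orbit_scale_le:
  assumes n: "0 < n" and a: "\<forall>t<n. 0 \<le> a t" and b: "\<forall>t<n. 0 \<le> b t" and x: "\<forall>i<n. 0 \<le> x i"
    and c: "0 \<le> c" and ab: "\<forall>t<n. a t \<le> c * b t" and e: "e < n"
  shows "circ_orbit n a x k e \<le> c ^ k * circ_orbit n b x k e"
proof -
  obtain ds where ds: "length ds = k" "set ds \<subseteq> {..<n}"
    "circ_orbit n a x k e = prod_list (map a ds) * x ((e + sum_list ds) mod n)"
    using circ_orbit_attained_by_walk[OF n a x e] .
  have "circ_orbit n a x k e \<le> c ^ k * prod_list (map b ds) * x ((e + sum_list ds) mod n)"
    using walk_weight_scale[OF a ab ds(2)] ds x n by (simp add: mult_right_mono)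
  also have "\<dots> \<le> c ^ k * circ_orbit n b x k e"
    using walk_weight_le_circ_orbit[OF n b x ds(1,2) e] c by (simp add: mult_left_mono mult.assoc)
  finally show ?thesis .
qed

lemma attr_bound_rescale:
  assumes n: "0 < n" and a: "\<forall>t<n. 0 \<le> a t" and b: "\<forall>t<n. 0 \<le> b t" and x: "\<forall>i<n. 0 \<le> x i"
    and bound: "attr_bound n a x" and Ma: "0 < max_coeff n a"
    and ab: "\<forall>t<n. a t * max_coeff n b \<le> max_coeff n a * b t"
  shows "attr_bound n b x"
proof (cases "max_coeff n b = 0")
  case True then show ?thesis using attr_bound_zero_rate[OF n b x] by simp
next
  case False
  define Ma' Mb where "Ma' = max_coeff n a" and "Mb = max_coeff n b"
  have Mb: "0 < Mb" using False max_coeff_nonneg[OF n b] Mb_def by simp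
  have c: "\<forall>t<n. a t \<le> (Ma' / Mb) * b t"
    using ab Mb unfolding Ma'_def Mb_def by (simp add: field_simps)
  show ?thesis unfolding attr_bound_def
  proof (intro allI impI)
    fix k e assume k: "n * n \<le> k" and e: "e < n"
    have "Ma' ^ k * x e \<le> circ_orbit n a x k e" using bound k e unfolding attr_bound_def Ma'_def by blast
    also have "\<dots> \<le> (Ma' / Mb) ^ k * circ_orbit n b x k e"
      using circ_orbit_scale_le[OF n a b x _ c e] Ma Mb Ma'_def by simp
    finally have "Ma' ^ k * (Mb ^ k * x e) \<le> Ma' ^ k * circ_orbit n b x k e"
      using Mb by (simp add: power_divide field_simps)
    then show "max_coeff n b ^ k * x e \<le> circ_orbit n b x k e"
      using Ma Ma'_def Mb_def by (simp add: mult_le_cancel_left_pos)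
  qed
qed

lemma tendsto_Max_lessThan:
  fixes f :: "nat \<Rightarrow> nat \<Rightarrow> real"
  shows "0 < n \<Longrightarrow> (\<forall>l<n. (\<lambda>m. f m l) \<longlonglongrightarrow> g l) \<Longrightarrow>
    (\<lambda>m. Max {f m l | l. l < n}) \<longlonglongrightarrow> Max {g l | l. l < n}"
proof (induction n)
  case 0 then show ?case by simp
next
  case (Suc n)
  show ?case
  proof (cases "n = 0")
    case True
    have "\<And>h. {h l | l. l < Suc 0} = {h 0}" by auto
    then show ?thesis using Suc True by simp
  next
    case False
    have "Max {h l | l. l < Suc n} = max (h n) (Max {h l | l. l < n})" for h :: "nat \<Rightarrow> real"
    proof -
      have "{h l | l. l < Suc n} = insert (h n) (h ` {..<n})" by (auto simp: less_Suc_eq)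
      moreover have "Max (insert (h n) (h ` {..<n})) = max (h n) (Max (h ` {..<n}))"
        using False by (intro Max_insert) auto
      ultimately show ?thesis unfolding setcompr_lessThan_eq_image by simp
    qed
    then show ?thesis by (simp only:) (intro tendsto_max, use Suc False in auto)
  qed
qed

lemma tendsto_mpow_Circ:
  assumes n: "0 < n" and conv: "\<forall>t<n. (\<lambda>m. a m t) \<longlonglongrightarrow> b t"
  shows "(\<lambda>m. mpow n (Circ n (a m)) k i j) \<longlonglongrightarrow> mpow n (Circ n b) k i j"
proof (induction k arbitrary: i j)
  case 0 then show ?case by simp
next
  case (Suc k)
  have "(\<lambda>m. Circ n (a m) i l) \<longlonglongrightarrow> Circ n b i l" for l
    unfolding Circ_def using conv n by simp
  then show ?case unfolding mpow.simps mmult_def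
    by (intro tendsto_Max_lessThan[OF n]) (auto intro!: tendsto_mult Suc.IH)
qed

lemma attr_bound_limit:
  assumes n: "0 < n" and conv: "\<forall>t<n. (\<lambda>m. a m t) \<longlonglongrightarrow> b t"
    and bound: "\<And>m. attr_bound n (a m) x"
  shows "attr_bound n b x"
  unfolding attr_bound_def
proof (intro allI impI)
  fix k e assume k: "n * n \<le> k" and e: "e < n"
  show "max_coeff n b ^ k * x e \<le> circ_orbit n b x k e"
  proof (rule LIMSEQ_le)
    show "(\<lambda>m. max_coeff n (a m) ^ k * x e) \<longlonglongrightarrow> max_coeff n b ^ k * x e"
      unfolding max_coeff_def by (intro tendsto_intros tendsto_Max_lessThan[OF n conv])
    show "(\<lambda>m. circ_orbit n (a m) x k e) \<longlonglongrightarrow> circ_orbit n b x k e"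
      unfolding circ_orbit_def mvec_def
      by (intro tendsto_Max_lessThan[OF n]) (auto intro!: tendsto_mult tendsto_mpow_Circ[OF n conv])
    show "\<exists>N. \<forall>m\<ge>N. max_coeff n (a m) ^ k * x e \<le> circ_orbit n (a m) x k e"
      using bound k e unfolding attr_bound_def by blast
  qed
qed

section \<open>Interval circulant matrices\<close>

lemma ivl_bounds: "v \<in> ivl k l u \<Longrightarrow> l \<le> v \<and> v \<le> u"
  by (cases k) auto

lemma ivl_endpoint_limit:
  assumes valid: "valid_ivl k l u" and v: "v = l \<or> v = u"
  shows "\<exists>s. (\<forall>m. s m \<in> ivl k l u) \<and> s \<longlonglongrightarrow> v"
proof (intro exI conjI allI)
  define w :: "nat \<Rightarrow> real" where "w m = inverse (real (Suc (Suc m)))" for m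
  have lu: "l \<le> u" "ivl k l u \<noteq> {}" using valid unfolding valid_ivl_def by auto
  show "(\<lambda>m. v + ((l + u) / 2 - v) * w m) \<longlonglongrightarrow> v"
    using tendsto_add[OF tendsto_const tendsto_mult[OF tendsto_const
          LIMSEQ_Suc[OF LIMSEQ_inverse_real_of_nat]], of v "(l + u) / 2 - v"]
    by (simp add: w_def)
  fix m
  have w: "0 < w m" "w m < 2" by (simp_all add: w_def field_simps)
  show "v + ((l + u) / 2 - v) * w m \<in> ivl k l u"
  proof (cases "l = u")
    case True
    then have "k = Closed" using lu by (cases k) auto
    then show ?thesis using True v by auto
  next
    case False
    then have "l < u" using lu by simp
    have "(u - l) / 2 * w m < (u - l) / 2 * 2"
      using w \<open>l < u\<close> by (intro mult_strict_left_mono) auto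
    then have "(u - l) / 2 * w m < u - l" by simp
    moreover have "0 < (u - l) / 2 * w m" using w \<open>l < u\<close> by simp
    moreover have "v + ((l + u) / 2 - v) * w m = (if v = l then l + (u - l) / 2 * w m
        else u - (u - l) / 2 * w m)"
      using v by (auto simp: field_simps)
    ultimately have "l < v + ((l + u) / 2 - v) * w m \<and> v + ((l + u) / 2 - v) * w m < u"
      by auto
    then show ?thesis by (cases k) auto
  qed
qed

lemma IC_E:
  assumes "A \<in> IC n ka la ua"
  obtains a where "A = Circ n a" "\<forall>t<n. a t \<in> ivl (ka t) (la t) (ua t)"
  using assms unfolding IC_def by blast

lemma ivl_coeffs_nonneg:
  "\<forall>t<n. valid_ivl (ka t) (la t) (ua t) \<Longrightarrow> \<forall>t<n. a t \<in> ivl (ka t) (la t) (ua t) \<Longrightarrow>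
   \<forall>t<n. 0 \<le> a t"
  unfolding valid_ivl_def by (meson ivl_bounds order_trans)

lemma ivec_nonneg:
  "\<forall>i<n. valid_ivl (kx i) (lx i) (ux i) \<Longrightarrow> x \<in> ivec n kx lx ux \<Longrightarrow> \<forall>i<n. 0 \<le> x i"
  using ivl_coeffs_nonneg unfolding ivec_def by blast

context
  fixes n :: nat and ka :: "nat \<Rightarrow> ikind" and la ua :: "nat \<Rightarrow> real" and x :: vec
  assumes n: "0 < n" and a_ok: "\<forall>t<n. valid_ivl (ka t) (la t) (ua t)"
    and x: "\<forall>i<n. 0 \<le> x i"
begin

text \<open>\<open>A^(i)\<close> need not belong to the interval matrix (its intervals may be open), but it is
  a limit of matrices that do, and the attraction bound passes to the limit.\<close>
lemma Ak_eigen_condition_if_IC_attracts: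
  assumes H: "\<forall>A\<in>IC n ka la ua. x \<in> Attr n A" and i: "i < n"
  shows "veq n (\<lambda>r. mlambda n (Ak n la ua i) * mvec n (mpow n (Ak n la ua i) (n^2)) x r)
                (mvec n (mpow n (Ak n la ua i) (n^2 + 1)) x)"
proof -
  define b where "b t = (if t = i then ua t else la t)" for t
  have Ak: "Ak n la ua i = Circ n b" unfolding Ak_def b_def ..
  have b: "\<forall>t<n. 0 \<le> b t" using a_ok unfolding b_def valid_ivl_def by auto
  have "\<forall>t\<in>{..<n}. \<exists>s. (\<forall>m. s m \<in> ivl (ka t) (la t) (ua t)) \<and> s \<longlonglongrightarrow> b t"
    using a_ok ivl_endpoint_limit unfolding b_def by simp
  then obtain s where s: "\<forall>t<n. (\<forall>m. s t m \<in> ivl (ka t) (la t) (ua t)) \<and> s t \<longlonglongrightarrow> b t"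
    by (auto dest!: bchoice)
  have bounds: "attr_bound n (\<lambda>t. s t m) x" for m
  proof -
    have mem: "\<forall>t<n. s t m \<in> ivl (ka t) (la t) (ua t)" using s by blast
    then have "Circ n (\<lambda>t. s t m) \<in> IC n ka la ua" unfolding IC_def by blast
    then show ?thesis
      using H Attr_Circ_iff_attr_bound[OF n ivl_coeffs_nonneg[OF a_ok mem] x] by blast
  qed
  have "attr_bound n b x" using s by (intro attr_bound_limit[OF n _ bounds]) auto
  then show ?thesis unfolding Ak using eigen_condition_Circ_iff_attr_bound[OF n b x] by simp
qed

lemma IC_attracts_if_Ak_eigen_conditions:
  assumes H: "\<forall>i<n. \<not> mzero n (Ak n la ua i) \<longrightarrow>
          veq n (\<lambda>r. mlambda n (Ak n la ua i) * mvec n (mpow n (Ak n la ua i) (n^2)) x r)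
                (mvec n (mpow n (Ak n la ua i) (n^2 + 1)) x)"
    and A: "A \<in> IC n ka la ua"
  shows "x \<in> Attr n A"
proof -
  obtain a where A_eq: "A = Circ n a" and mem: "\<forall>t<n. a t \<in> ivl (ka t) (la t) (ua t)"
    using A by (rule IC_E)
  have a: "\<forall>t<n. 0 \<le> a t" using ivl_coeffs_nonneg[OF a_ok mem] .
  have a_bounds: "la t \<le> a t \<and> a t \<le> ua t" if "t < n" for t using mem that ivl_bounds by blast
  have "attr_bound n a x"
  proof (cases "max_coeff n a = 0")
    case True then show ?thesis by (rule attr_bound_zero_rate[OF n a x])
  next
    case False
    define Ma where "Ma = max_coeff n a"
    have Ma: "0 < Ma" using False max_coeff_nonneg[OF n a] Ma_def by simp
    obtain i where i: "i < n" "a i = Ma" using max_coeff_attained[OF n] Ma_def by metis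
    define b where "b t = (if t = i then ua t else la t)" for t
    have Ak: "Ak n la ua i = Circ n b" unfolding Ak_def b_def ..
    have b: "\<forall>t<n. 0 \<le> b t" using a_ok unfolding b_def valid_ivl_def by auto
    define Mb where "Mb = max_coeff n b"
    have Ma_ua: "Ma \<le> ua i" using a_bounds i by auto
    have ua_Mb: "ua i \<le> Mb" using max_coeff_ge[OF i(1), of b] Mb_def b_def by simp
    have Ma_Mb: "Ma \<le> Mb" "0 < Mb" using Ma Ma_ua ua_Mb by linarith+
    have "Circ n b 0 i = ua i" using i unfolding Circ_def b_def by simp
    then have "\<not> mzero n (Ak n la ua i)" unfolding mzero_def Ak using n i Ma Ma_ua by force
    then have "attr_bound n b x"
      using H[rule_format, OF i(1)] eigen_condition_Circ_iff_attr_bound[OF n b x] unfolding Ak by simp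
    moreover have "b t * Ma \<le> Mb * a t" if "t < n" for t
    proof (cases "t = i")
      case True then show ?thesis using i ua_Mb Ma by (simp add: b_def mult.commute mult_right_mono)
    next
      case False
      then have "la t * Ma \<le> a t * Mb" using a_bounds[OF that] a_ok that Ma_Mb Ma
        unfolding valid_ivl_def by (intro mult_mono) auto
      then show ?thesis using False by (simp add: b_def mult.commute)
    qed
    ultimately show ?thesis
      using attr_bound_rescale[OF n b a x] Ma_Mb Ma_def Mb_def by simp
  qed
  then show ?thesis unfolding A_eq using Attr_Circ_iff_attr_bound[OF n a x] by simp
qed

text \<open>\<open>Ahat\<close> has maximal coefficient \<open>max la\<close>, which is at most the maximal coefficient of
  any member of the interval matrix; hence its normalised coefficients dominate theirs.\<close>
lemma Ahat_attracts_if_IC_attracts: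
  assumes hat: "Ahat n la ua \<in> IC n ka la ua"
    and A: "A \<in> IC n ka la ua" and attr: "x \<in> Attr n A"
  shows "x \<in> Attr n (Ahat n la ua)"
proof -
  define L where "L = Max {la s | s. s < n}"
  define h where "h t = min L (ua t)" for t
  have Ahat: "Ahat n la ua = Circ n h" unfolding Ahat_def h_def L_def ..
  obtain h' where h': "Circ n h = Circ n h'" "\<forall>t<n. h' t \<in> ivl (ka t) (la t) (ua t)"
    using hat unfolding Ahat by (rule IC_E)
  have "h t = h' t" if "t < n" for t
    using fun_cong[OF fun_cong[OF h'(1)], of 0 t] that unfolding Circ_def by simp
  then have h_lower: "la t \<le> h t" if "t < n" for t using h'(2) that ivl_bounds by metis
  obtain s where s: "s < n" "la s = L" using Max_lessThan_attained[OF n, of la] L_def by metis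
  have L: "0 \<le> L" using s a_ok unfolding valid_ivl_def by metis
  have h: "\<forall>t<n. 0 \<le> h t" unfolding h_def using L a_ok unfolding valid_ivl_def by auto
  have Mh: "max_coeff n h = L"
  proof (rule antisym)
    show "max_coeff n h \<le> L" unfolding max_coeff_def h_def using n by (intro Max_lessThan_le) auto
    show "L \<le> max_coeff n h" using h_lower[OF s(1)] max_coeff_ge[OF s(1), of h] s(2) by simp
  qed
  obtain a where A_eq: "A = Circ n a" and mem: "\<forall>t<n. a t \<in> ivl (ka t) (la t) (ua t)"
    using A by (rule IC_E)
  have a: "\<forall>t<n. 0 \<le> a t" using ivl_coeffs_nonneg[OF a_ok mem] .
  have a_bounds: "la t \<le> a t \<and> a t \<le> ua t" if "t < n" for t using mem that ivl_bounds by blast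
  have "attr_bound n h x"
  proof (cases "L = 0")
    case True then show ?thesis using attr_bound_zero_rate[OF n h x] Mh by simp
  next
    case False
    define Ma where "Ma = max_coeff n a"
    have "L \<le> Ma" using max_coeff_ge[OF s(1), of a] a_bounds[OF s(1)] s(2) Ma_def by simp
    then have L_Ma: "0 < L" "0 < Ma" using L False by linarith+
    have "a t * L \<le> Ma * h t" if "t < n" for t
    proof (cases "L \<le> ua t")
      case True then show ?thesis
        using max_coeff_ge[OF that, of a] L_Ma Ma_def by (simp add: h_def mult.commute mult_right_mono)
    next
      case False then show ?thesis
        using a_bounds[OF that] a[rule_format, OF that] \<open>L \<le> Ma\<close> L_Ma
        by (simp add: h_def mult.commute mult_mono)
    qed
    moreover have "attr_bound n a x" using attr Attr_Circ_iff_attr_bound[OF n a x] A_eq by simp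
    ultimately show ?thesis using attr_bound_rescale[OF n a h x] L_Ma Mh Ma_def by simp
  qed
  then show ?thesis unfolding Ahat using Attr_Circ_iff_attr_bound[OF n h x] by simp
qed

end

theorem mainTheorem20:
  fixes n :: nat
    and ka kx :: "nat \<Rightarrow> ikind"
    and la ua lx ux :: "nat \<Rightarrow> real"
  assumes n: "1 \<le> n"
    and a_ok: "\<forall>t<n. valid_ivl (ka t) (la t) (ua t)"
    and x_ok: "\<forall>i<n. valid_ivl (kx i) (lx i) (ux i)"
  shows
    "((\<exists>x\<in>ivec n kx lx ux. \<forall>A\<in>IC n ka la ua. x \<in> Attr n A)
       \<longleftrightarrow>
      (\<exists>x\<in>ivec n kx lx ux. \<forall>i<n. \<not> mzero n (Ak n la ua i) \<longrightarrow>
          veq n (\<lambda>r. mlambda n (Ak n la ua i) * mvec n (mpow n (Ak n la ua i) (n^2)) x r)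
                (mvec n (mpow n (Ak n la ua i) (n^2 + 1)) x)))
     \<and>
     (Ahat n la ua \<in> IC n ka la ua \<longrightarrow>
       ((\<forall>x\<in>ivec n kx lx ux. \<exists>A\<in>IC n ka la ua. x \<in> Attr n A)
         \<longleftrightarrow>
        (\<exists>A\<in>IC n ka la ua. \<forall>x\<in>ivec n kx lx ux. x \<in> Attr n A)))"
proof -
  have n0: "0 < n" using n by simp
  have "(\<forall>A\<in>IC n ka la ua. x \<in> Attr n A) \<longleftrightarrow>
      (\<forall>i<n. \<not> mzero n (Ak n la ua i) \<longrightarrow>
          veq n (\<lambda>r. mlambda n (Ak n la ua i) * mvec n (mpow n (Ak n la ua i) (n^2)) x r)
                (mvec n (mpow n (Ak n la ua i) (n^2 + 1)) x))"
    if "x \<in> ivec n kx lx ux" for x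
    using Ak_eigen_condition_if_IC_attracts[OF n0 a_ok ivec_nonneg[OF x_ok that]]
      IC_attracts_if_Ak_eigen_conditions[OF n0 a_ok ivec_nonneg[OF x_ok that]] by blast
  moreover have "\<forall>x\<in>ivec n kx lx ux. x \<in> Attr n (Ahat n la ua)"
    if "Ahat n la ua \<in> IC n ka la ua" "\<forall>x\<in>ivec n kx lx ux. \<exists>A\<in>IC n ka la ua. x \<in> Attr n A"
    using Ahat_attracts_if_IC_attracts[OF n0 a_ok ivec_nonneg[OF x_ok]] that by blast
  ultimately show ?thesis by blast
qed

end
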